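(* The MPB rule $M$ does not satisfy any of the following: (a) discount monotonicity: for every instance $I$ and every $p\in W_M(I)$, if $I'$ is obtained from $I$ by reducing the cost of $p$ to $c(p)-1$, then $p\in W_M(I')$; (b) limit monotonicity: for every instance $I$ in which no project costs $b+1$, if $I'$ is obtained from $I$ by increasing the budget to $b+1$, then $W_M(I)\subseteq W_M(I')$; (c) strong exhaustiveness: for every instance $I$, every $S\in M(I)$ and every $p\in P\setminus S$, $c(S)+c(p)>b$. That is, for each of (a), (b), (c) there exists an instance on which the stated property fails.
   Context: A PB instance is $I=\langle N,P,c,b,\mathcal{A}\rangle$ with voters $N=\{1,\dots,n\}$, projects $P$, costs $c:P\to\mathbb{N}$, budget $b\in\mathbb{N}$, and approval sets $A_i\subseteq P$. $c(S)=\sum_{p\in S}c(p)$; $S$ is feasible if $c(S)\le b$; $u_i(S)=c(S\cap A_i)$. The MPB rule $M$ outputs $M(I)$, the set of all feasible $S$ maximizing $\min_{i\in N}u_i(S)$ among feasible sets. $W_M(I)=\{p\in P:\exists S\in M(I),\ p\in S\}$. *)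

theory Defs
  imports Main
begin

record 'p pb_inst =
  voters :: nat
  projects :: "'p set"
  cost :: "'p \<Rightarrow> nat"
  budget :: nat
  approvals :: "nat \<Rightarrow> 'p set"

definition valid_inst :: "'p pb_inst \<Rightarrow> bool" where
  "valid_inst I \<longleftrightarrow> voters I \<ge> 1 \<and> finite (projects I) \<and>
     (\<forall>i\<in>{1..voters I}. approvals I i \<subseteq> projects I)"

definition setcost :: "'p pb_inst \<Rightarrow> 'p set \<Rightarrow> nat" where
  "setcost I S = (\<Sum>p\<in>S. cost I p)"

definition feasible :: "'p pb_inst \<Rightarrow> 'p set \<Rightarrow> bool" where
  "feasible I S \<longleftrightarrow> S \<subseteq> projects I \<and> setcost I S \<le> budget I"

definition util :: "'p pb_inst \<Rightarrow> nat \<Rightarrow> 'p set \<Rightarrow> nat" where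
  "util I i S = setcost I (S \<inter> approvals I i)"

definition minutil :: "'p pb_inst \<Rightarrow> 'p set \<Rightarrow> nat" where
  "minutil I S = (MIN i\<in>{1..voters I}. util I i S)"

definition MPB :: "'p pb_inst \<Rightarrow> 'p set set" where
  "MPB I = {S. feasible I S \<and> (\<forall>T. feasible I T \<longrightarrow> minutil I T \<le> minutil I S)}"

definition winners :: "'p pb_inst \<Rightarrow> 'p set" where
  "winners I = {p\<in>projects I. \<exists>S\<in>MPB I. p \<in> S}"

end

theory Submission
  imports Defs
begin

text \<open>All three counterexamples have a single voter. When that voter approves every project,
  MPB selects exactly the feasible sets spending the whole budget (if such a set exists), so a
  project is a winner iff it lies in some budget-exhausting set. Discounting a project or raising
  the budget can destroy every such set through that project. When the voter approves only some
  projects, any feasible set containing all of them is optimal, however much money it leaves.\<close>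

lemma minutil_single_voter: "voters I = 1 \<Longrightarrow> minutil I S = util I 1 S"
  by (simp add: minutil_def)

lemma util_le_setcost_approvals:
  assumes "finite (approvals I i)"
  shows "util I i S \<le> setcost I (approvals I i)"
  unfolding util_def setcost_def using assms by (intro sum_mono2) auto

lemma MPB_single_voter_if_approvals_subset:
  assumes "voters I = 1" "finite (approvals I 1)" "feasible I S" "approvals I 1 \<subseteq> S"
  shows "S \<in> MPB I"
proof -
  have "util I 1 S = setcost I (approvals I 1)"
    using assms(4) by (simp add: util_def Int_absorb1)
  with assms(1,3) util_le_setcost_approvals[OF assms(2)] show ?thesis
    by (simp add: MPB_def minutil_single_voter)
qed

lemma MPB_single_voter_full_approval:
  assumes "voters I = 1" "approvals I 1 = projects I"
    and "feasible I T" "setcost I T = budget I"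
  shows "MPB I = {S. feasible I S \<and> setcost I S = budget I}"
proof -
  have minutil: "minutil I S = setcost I S" if "feasible I S" for S
    using that assms(1,2) by (auto simp: minutil_single_voter util_def feasible_def Int_absorb2)
  show ?thesis
  proof (intro set_eqI iffI)
    fix S assume "S \<in> MPB I"
    then have "feasible I S" "minutil I T \<le> minutil I S"
      using assms(3) by (auto simp: MPB_def)
    then show "S \<in> {S. feasible I S \<and> setcost I S = budget I}"
      using assms(3,4) minutil by (auto simp: feasible_def)
  next
    fix S assume "S \<in> {S. feasible I S \<and> setcost I S = budget I}"
    then show "S \<in> MPB I"
      using minutil by (auto simp: MPB_def feasible_def)
  qed
qed

lemma winners_single_voter_full_approval:
  assumes "voters I = 1" "approvals I 1 = projects I"
    and "feasible I T" "setcost I T = budget I"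
  shows "p \<in> winners I \<longleftrightarrow> (\<exists>S. feasible I S \<and> p \<in> S \<and> setcost I S = budget I)"
  using MPB_single_voter_full_approval[OF assms]
  by (auto simp: winners_def feasible_def)

lemma discount_monotonicity_fails:
  "\<exists>(I::nat pb_inst) p. valid_inst I \<and> p \<in> winners I \<and> cost I p \<ge> 1 \<and>
     p \<notin> winners (I\<lparr>cost := (cost I)(p := cost I p - 1)\<rparr>)"
proof -
  let ?I = "\<lparr>voters = 1, projects = {0::nat, 1}, cost = \<lambda>_. 2, budget = 2,
            approvals = \<lambda>_. {0, 1}\<rparr>"
  let ?J = "?I\<lparr>cost := (cost ?I)(0 := cost ?I 0 - 1)\<rparr>"
  have "0 \<in> winners ?I"
    by (subst winners_single_voter_full_approval[where T = "{0}"])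
      (auto simp: feasible_def setcost_def)
  moreover have "0 \<notin> winners ?J"
  proof (subst winners_single_voter_full_approval[where T = "{1}"])
    show "\<not> (\<exists>S. feasible ?J S \<and> 0 \<in> S \<and> setcost ?J S = budget ?J)"
    proof (intro notI, elim exE conjE)
      fix S assume "feasible ?J S" "0 \<in> S" "setcost ?J S = budget ?J"
      then have "S = {0} \<or> S = {0, 1}" and "setcost ?J S = 2"
        by (auto simp: feasible_def)
      then show False by (auto simp: setcost_def)
    qed
  qed (auto simp: feasible_def setcost_def)
  ultimately show ?thesis
    by (intro exI[of _ ?I] exI[of _ 0]) (simp add: valid_inst_def)
qed

lemma limit_monotonicity_fails:
  "\<exists>I::nat pb_inst. valid_inst I \<and> (\<forall>q\<in>projects I. cost I q \<noteq> budget I + 1) \<and>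
     \<not> winners I \<subseteq> winners (I\<lparr>budget := budget I + 1\<rparr>)"
proof -
  let ?I = "\<lparr>voters = 1, projects = {0::nat, 1, 2}, cost = (\<lambda>_. 2)(0 := 3), budget = 3,
            approvals = \<lambda>_. {0, 1, 2}\<rparr>"
  let ?J = "?I\<lparr>budget := budget ?I + 1\<rparr>"
  have "0 \<in> winners ?I"
    by (subst winners_single_voter_full_approval[where T = "{0}"])
      (auto simp: feasible_def setcost_def)
  moreover have "0 \<notin> winners ?J"
  proof (subst winners_single_voter_full_approval[where T = "{1, 2}"])
    show "\<not> (\<exists>S. feasible ?J S \<and> 0 \<in> S \<and> setcost ?J S = budget ?J)"
    proof (intro notI, elim exE conjE)
      fix S assume "feasible ?J S" "0 \<in> S" "setcost ?J S = budget ?J"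
      then have "S \<in> {{0}, {0, 1}, {0, 2}, {0, 1, 2}}" and "setcost ?J S = 4"
        by (auto simp: feasible_def)
      then show False by (auto simp: setcost_def)
    qed
  qed (auto simp: feasible_def setcost_def)
  ultimately show ?thesis
    by (intro exI[of _ ?I]) (auto simp: valid_inst_def)
qed

lemma strong_exhaustiveness_fails:
  "\<exists>(I::nat pb_inst) S p. valid_inst I \<and> S \<in> MPB I \<and> p \<in> projects I - S \<and>
     setcost I S + cost I p \<le> budget I"
proof -
  let ?I = "\<lparr>voters = 1, projects = {0::nat, 1}, cost = \<lambda>_. 1, budget = 2,
            approvals = \<lambda>_. {0}\<rparr>"
  have "{0} \<in> MPB ?I"
    by (rule MPB_single_voter_if_approvals_subset) (auto simp: feasible_def setcost_def)
  then show ?thesis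
    by (intro exI[of _ ?I] exI[of _ "{0}"] exI[of _ 1]) (auto simp: valid_inst_def setcost_def)
qed

theorem theorem7:
  shows "(\<exists>(I::nat pb_inst) p. valid_inst I \<and> p \<in> winners I \<and> cost I p \<ge> 1 \<and>
            p \<notin> winners (I\<lparr>cost := (cost I)(p := cost I p - 1)\<rparr>))
       \<and> (\<exists>I::nat pb_inst. valid_inst I \<and> (\<forall>q\<in>projects I. cost I q \<noteq> budget I + 1) \<and>
            \<not> winners I \<subseteq> winners (I\<lparr>budget := budget I + 1\<rparr>))
       \<and> (\<exists>(I::nat pb_inst) S p. valid_inst I \<and> S \<in> MPB I \<and> p \<in> projects I - S \<and>
            setcost I S + cost I p \<le> budget I)"
  using discount_monotonicity_fails limit_monotonicity_fails strong_exhaustiveness_fails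
  by blast

end
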